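(* Let $\alpha$ be a partial action datum of $M$ on $X\in\mathscr{C}$, let $\eta\colon F\to\Delta(Y)$ be a colimit of the functor $F$ associated to $\alpha$, and let $\beta$ be the global action associated to $\eta$. Then $\eta_e\colon\alpha\to\beta$ is a reflection of $\alpha$ in $\mathrm{Act}_M(\mathscr{C})$.
   Context: Standing assumptions: $M$ is a monoid with identity $e$ and $\mathscr{C}$ is a category with pullbacks. A partial action datum of $M$ on $X$ assigns to each $m\in M$ an isomorphism class of spans $[\operatorname{dom}\alpha_m,\iota_m,\alpha_m]$ with $\iota_m\colon\operatorname{dom}\alpha_m\to X$ a monomorphism and $\alpha_m\colon\operatorname{dom}\alpha_m\to X$ (isomorphism of spans: an isomorphism of apexes commuting with both legs); representatives are fixed. A global action of $M$ on $Y$ is a datum with $\beta(m)=[Y,\mathrm{id}_Y,\beta_m]$, $\beta_e=\mathrm{id}_Y$, $\beta_n\circ\beta_m=\beta_{nm}$. Given data $\alpha$ on $X$ and $\beta$ on $Y$ with representatives $[\operatorname{dom}\alpha_m,\iota_m,\alpha_m]$, $[\operatorname{dom}\beta_m,\kappa_m,\beta_m]$, a datum morphism $\alpha\to\beta$ is a morphism $f\colon X\to Y$ such that for each $m$ there is $f_m\colon\operatorname{dom}\alpha_m\to\operatorname{dom}\beta_m$ with $\kappa_m\circ f_m=f\circ\iota_m$ and $\beta_m\circ f_m=f\circ\alpha_m$. $\mathrm{Act}_M(\mathscr{C})$ is the category of global actions with datum morphisms. A reflection of $\alpha$ in $\mathrm{Act}_M(\mathscr{C})$ is a datum morphism $r\colon\alpha\to\beta$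 with $\beta$ global such that for every datum morphism $f\colon\alpha\to\gamma$ with $\gamma$ global there is a unique datum morphism $f'\colon\beta\to\gamma$ with $f'\circ r=f$. Let $I$ be the category with objects $(M\times M)\sqcup M$, with for each $(m,n)$ one morphism $(m,n)\to mn$ and one morphism $(m,n)\to m$ and no other non-identity morphisms. The functor associated to $\alpha$ is $F\colon I\to\mathscr{C}$ with $F(m,n)=\operatorname{dom}\alpha_n$, $F(m)=X$, $(m,n)\to mn\mapsto\iota_n$, $(m,n)\to m\mapsto\alpha_n$; $\Delta(Y)$ is the constant functor at $Y$. For a colimit $\eta\colon F\to\Delta(Y)$ of $F$, the global action associated to $\eta$ is $\beta(m)=[Y,\mathrm{id}_Y,\beta_m]$, where $\beta_m\colon Y\to Y$ is the unique morphism with $\beta_m\circ\eta_{(s,t)}=\eta_{(ms,t)}$ and $\beta_m\circ\eta_s=\eta_{ms}$ for all $s,t\in M$ (this is a global action). *)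

theory Defs
  imports Main
begin

text \<open>A (small-or-large) category given by objects, arrows, domain, codomain,
  identities and composition; Comp g f is g after f (defined when Cod f = Dom g).\<close>

record ('o, 'a) cat =
  Ob :: "'o set"
  Ar :: "'a set"
  Dom :: "'a \<Rightarrow> 'o"
  Cod :: "'a \<Rightarrow> 'o"
  Id :: "'o \<Rightarrow> 'a"
  Comp :: "'a \<Rightarrow> 'a \<Rightarrow> 'a"

definition hom :: "('o, 'a) cat \<Rightarrow> 'o \<Rightarrow> 'o \<Rightarrow> 'a set" where
  "hom C x y = {f \<in> Ar C. Dom C f = x \<and> Cod C f = y}"

definition category :: "('o, 'a) cat \<Rightarrow> bool" where
  "category C \<longleftrightarrow>
     (\<forall>f\<in>Ar C. Dom C f \<in> Ob C \<and> Cod C f \<in> Ob C) \<and>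
     (\<forall>x\<in>Ob C. Id C x \<in> hom C x x) \<and>
     (\<forall>f\<in>Ar C. \<forall>g\<in>Ar C. Cod C f = Dom C g \<longrightarrow> Comp C g f \<in> hom C (Dom C f) (Cod C g)) \<and>
     (\<forall>f\<in>Ar C. Comp C (Id C (Cod C f)) f = f \<and> Comp C f (Id C (Dom C f)) = f) \<and>
     (\<forall>f\<in>Ar C. \<forall>g\<in>Ar C. \<forall>h\<in>Ar C. Cod C f = Dom C g \<longrightarrow> Cod C g = Dom C h \<longrightarrow>
        Comp C h (Comp C g f) = Comp C (Comp C h g) f)"

definition mono :: "('o, 'a) cat \<Rightarrow> 'a \<Rightarrow> bool" where
  "mono C m \<longleftrightarrow> m \<in> Ar C \<and>
     (\<forall>g\<in>Ar C. \<forall>h\<in>Ar C. Dom C g = Dom C h \<longrightarrow> Cod C g = Dom C m \<longrightarrow> Cod C h = Dom C m \<longrightarrow>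
        Comp C m g = Comp C m h \<longrightarrow> g = h)"

definition has_pullbacks :: "('o, 'a) cat \<Rightarrow> bool" where
  "has_pullbacks C \<longleftrightarrow>
     (\<forall>f\<in>Ar C. \<forall>g\<in>Ar C. Cod C f = Cod C g \<longrightarrow>
        (\<exists>P\<in>Ob C. \<exists>p\<in>hom C P (Dom C f). \<exists>q\<in>hom C P (Dom C g).
           Comp C f p = Comp C g q \<and>
           (\<forall>Q\<in>Ob C. \<forall>p'\<in>hom C Q (Dom C f). \<forall>q'\<in>hom C Q (Dom C g).
              Comp C f p' = Comp C g q' \<longrightarrow>
              (\<exists>!u. u \<in> hom C Q P \<and> Comp C p u = p' \<and> Comp C q u = q'))))"

text \<open>A partial action datum of the monoid 'm on X, given by the fixed representatives
  (dom alpha_m, iota_m, alpha_m) of the span classes.\<close>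

definition partial_action_datum ::
  "('o, 'a) cat \<Rightarrow> 'o \<Rightarrow> ('m \<Rightarrow> 'o) \<Rightarrow> ('m \<Rightarrow> 'a) \<Rightarrow> ('m \<Rightarrow> 'a) \<Rightarrow> bool" where
  "partial_action_datum C X D \<iota> \<alpha> \<longleftrightarrow> X \<in> Ob C \<and>
     (\<forall>m. D m \<in> Ob C \<and> \<iota> m \<in> hom C (D m) X \<and> mono C (\<iota> m) \<and> \<alpha> m \<in> hom C (D m) X)"

definition global_action ::
  "('o, 'a) cat \<Rightarrow> 'o \<Rightarrow> ('m::monoid_mult \<Rightarrow> 'a) \<Rightarrow> bool" where
  "global_action C Y \<beta> \<longleftrightarrow> Y \<in> Ob C \<and>
     (\<forall>m. \<beta> m \<in> hom C Y Y) \<and> \<beta> 1 = Id C Y \<and>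
     (\<forall>m n. Comp C (\<beta> n) (\<beta> m) = \<beta> (n * m))"

definition datum_morphism ::
  "('o, 'a) cat \<Rightarrow> 'o \<Rightarrow> ('m \<Rightarrow> 'o) \<Rightarrow> ('m \<Rightarrow> 'a) \<Rightarrow> ('m \<Rightarrow> 'a)
     \<Rightarrow> 'o \<Rightarrow> ('m \<Rightarrow> 'o) \<Rightarrow> ('m \<Rightarrow> 'a) \<Rightarrow> ('m \<Rightarrow> 'a) \<Rightarrow> 'a \<Rightarrow> bool" where
  "datum_morphism C X D \<iota> \<alpha> Y E \<kappa> \<beta> f \<longleftrightarrow> f \<in> hom C X Y \<and>
     (\<forall>m. \<exists>fm \<in> hom C (D m) (E m).
        Comp C (\<kappa> m) fm = Comp C f (\<iota> m) \<and> Comp C (\<beta> m) fm = Comp C f (\<alpha> m))"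

abbreviation datum_morphism_to_global ::
  "('o, 'a) cat \<Rightarrow> 'o \<Rightarrow> ('m \<Rightarrow> 'o) \<Rightarrow> ('m \<Rightarrow> 'a) \<Rightarrow> ('m \<Rightarrow> 'a)
     \<Rightarrow> 'o \<Rightarrow> ('m \<Rightarrow> 'a) \<Rightarrow> 'a \<Rightarrow> bool" where
  "datum_morphism_to_global C X D \<iota> \<alpha> Y \<beta> f \<equiv>
     datum_morphism C X D \<iota> \<alpha> Y (\<lambda>_. Y) (\<lambda>_. Id C Y) \<beta> f"

definition reflection ::
  "('o, 'a) cat \<Rightarrow> 'o \<Rightarrow> ('m::monoid_mult \<Rightarrow> 'o) \<Rightarrow> ('m \<Rightarrow> 'a) \<Rightarrow> ('m \<Rightarrow> 'a)
     \<Rightarrow> 'o \<Rightarrow> ('m \<Rightarrow> 'a) \<Rightarrow> 'a \<Rightarrow> bool" where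
  "reflection C X D \<iota> \<alpha> Y \<beta> r \<longleftrightarrow>
     global_action C Y \<beta> \<and> datum_morphism_to_global C X D \<iota> \<alpha> Y \<beta> r \<and>
     (\<forall>Z \<gamma> f. global_action C Z \<gamma> \<longrightarrow> datum_morphism_to_global C X D \<iota> \<alpha> Z \<gamma> f \<longrightarrow>
        (\<exists>!f'. datum_morphism C Y (\<lambda>_. Y) (\<lambda>_. Id C Y) \<beta> Z (\<lambda>_. Z) (\<lambda>_. Id C Z) \<gamma> f'
               \<and> Comp C f' r = f))"

text \<open>Cocones from the functor F associated to alpha (on the index category I with objects
  (M x M) + M) to the constant functor at Y: components etaP m n : dom alpha_n -> Y at (m,n)
  and etaS m : X -> Y at m, natural w.r.t. (m,n) -> mn (image iota_n) and (m,n) -> m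
  (image alpha_n).\<close>

definition cocone ::
  "('o, 'a) cat \<Rightarrow> 'o \<Rightarrow> ('m::monoid_mult \<Rightarrow> 'o) \<Rightarrow> ('m \<Rightarrow> 'a) \<Rightarrow> ('m \<Rightarrow> 'a)
     \<Rightarrow> 'o \<Rightarrow> ('m \<Rightarrow> 'm \<Rightarrow> 'a) \<Rightarrow> ('m \<Rightarrow> 'a) \<Rightarrow> bool" where
  "cocone C X D \<iota> \<alpha> Y etaP etaS \<longleftrightarrow> Y \<in> Ob C \<and>
     (\<forall>m n. etaP m n \<in> hom C (D n) Y) \<and> (\<forall>m. etaS m \<in> hom C X Y) \<and>
     (\<forall>m n. Comp C (etaS (m * n)) (\<iota> n) = etaP m n) \<and>
     (\<forall>m n. Comp C (etaS m) (\<alpha> n) = etaP m n)"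

definition colimit ::
  "('o, 'a) cat \<Rightarrow> 'o \<Rightarrow> ('m::monoid_mult \<Rightarrow> 'o) \<Rightarrow> ('m \<Rightarrow> 'a) \<Rightarrow> ('m \<Rightarrow> 'a)
     \<Rightarrow> 'o \<Rightarrow> ('m \<Rightarrow> 'm \<Rightarrow> 'a) \<Rightarrow> ('m \<Rightarrow> 'a) \<Rightarrow> bool" where
  "colimit C X D \<iota> \<alpha> Y etaP etaS \<longleftrightarrow> cocone C X D \<iota> \<alpha> Y etaP etaS \<and>
     (\<forall>Z zP zS. cocone C X D \<iota> \<alpha> Z zP zS \<longrightarrow>
        (\<exists>!u. u \<in> hom C Y Z \<and> (\<forall>m n. Comp C u (etaP m n) = zP m n) \<and>
                              (\<forall>m. Comp C u (etaS m) = zS m)))"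

definition assoc_action ::
  "('o, 'a) cat \<Rightarrow> 'o \<Rightarrow> ('m::monoid_mult \<Rightarrow> 'm \<Rightarrow> 'a) \<Rightarrow> ('m \<Rightarrow> 'a) \<Rightarrow> 'm \<Rightarrow> 'a" where
  "assoc_action C Y etaP etaS m =
     (THE b. b \<in> hom C Y Y \<and> (\<forall>s t. Comp C b (etaP s t) = etaP (m * s) t) \<and>
                             (\<forall>s. Comp C b (etaS s) = etaS (m * s)))"

end

theory Submission
  imports Defs
begin

text \<open>The action \<open>\<beta>\<^sub>m\<close> is the map induced by the shifted cocone \<open>s \<mapsto> \<eta>\<^sub>m\<^sub>s\<close>, so
  \<open>\<beta>\<^sub>s \<circ> \<eta>\<^sub>e = \<eta>\<^sub>s\<close>; since \<open>\<eta>\<^sub>(\<^sub>s\<^sub>,\<^sub>t\<^sub>) = \<eta>\<^sub>s \<circ> \<alpha>\<^sub>t\<close>, the \<open>\<eta>\<^sub>s\<close> alone jointly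
  determine maps out of \<open>Y\<close>. A datum morphism \<open>f\<close> into a global action \<open>\<gamma>\<close> yields the
  cocone \<open>s \<mapsto> \<gamma>\<^sub>s \<circ> f\<close>, whose mediating map is an equivariant extension of \<open>f\<close> along
  \<open>\<eta>\<^sub>e\<close>; any equivariant extension \<open>g\<close> satisfies \<open>g \<circ> \<eta>\<^sub>s = \<gamma>\<^sub>s \<circ> g \<circ> \<eta>\<^sub>e\<close>, so it
  is unique.\<close>

lemma cat_hom_Cod_Ob: "category C \<Longrightarrow> f \<in> hom C x y \<Longrightarrow> y \<in> Ob C"
  unfolding category_def hom_def by auto

lemma cat_comp_in_hom:
  "category C \<Longrightarrow> f \<in> hom C x y \<Longrightarrow> g \<in> hom C y z \<Longrightarrow> Comp C g f \<in> hom C x z"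
  unfolding category_def hom_def by auto

lemma cat_comp_assoc:
  "category C \<Longrightarrow> f \<in> hom C x y \<Longrightarrow> g \<in> hom C y z \<Longrightarrow> h \<in> hom C z w
   \<Longrightarrow> Comp C (Comp C h g) f = Comp C h (Comp C g f)"
  unfolding category_def hom_def by auto

lemma cat_Id_left: "category C \<Longrightarrow> f \<in> hom C x y \<Longrightarrow> Comp C (Id C y) f = f"
  unfolding category_def hom_def by auto

lemma cat_Id_right: "category C \<Longrightarrow> f \<in> hom C x y \<Longrightarrow> Comp C f (Id C x) = f"
  unfolding category_def hom_def by auto

lemma cat_Id_in_hom: "category C \<Longrightarrow> x \<in> Ob C \<Longrightarrow> Id C x \<in> hom C x x"
  unfolding category_def by auto

lemma partial_action_datum_homs:
  assumes "partial_action_datum C X D \<iota> \<alpha>"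
  shows "\<iota> m \<in> hom C (D m) X" and "\<alpha> m \<in> hom C (D m) X"
  using assms unfolding partial_action_datum_def by auto

lemma global_action_in_hom: "global_action C Z \<gamma> \<Longrightarrow> \<gamma> m \<in> hom C Z Z"
  unfolding global_action_def by auto

lemma datum_morphism_to_global_iff:
  assumes "category C" and "partial_action_datum C X D \<iota> \<alpha>"
  shows "datum_morphism_to_global C X D \<iota> \<alpha> Z \<gamma> f \<longleftrightarrow>
    f \<in> hom C X Z \<and> (\<forall>m. Comp C (\<gamma> m) (Comp C f (\<iota> m)) = Comp C f (\<alpha> m))"
proof -
  have "Comp C (Id C Z) fm = Comp C f (\<iota> m) \<longleftrightarrow> fm = Comp C f (\<iota> m)"
    if "fm \<in> hom C (D m) Z" for fm m
    using cat_Id_left[OF assms(1) that] by simp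
  moreover have "Comp C f (\<iota> m) \<in> hom C (D m) Z" if "f \<in> hom C X Z" for m
    using cat_comp_in_hom[OF assms(1) partial_action_datum_homs(1)[OF assms(2)] that] .
  ultimately show ?thesis
    unfolding datum_morphism_def by (metis (no_types, lifting))
qed

lemma datum_morphism_between_globals_iff:
  assumes "category C"
  shows "datum_morphism C Y (\<lambda>_. Y) (\<lambda>_. Id C Y) \<beta> Z (\<lambda>_. Z) (\<lambda>_. Id C Z) \<gamma> g \<longleftrightarrow>
    g \<in> hom C Y Z \<and> (\<forall>m. Comp C (\<gamma> m) g = Comp C g (\<beta> m))"
  unfolding datum_morphism_def
  using cat_Id_left[OF assms] cat_Id_right[OF assms] by (metis (no_types, lifting))

lemma cocone_postcomp:
  assumes C: "category C" and datum: "partial_action_datum C X D \<iota> \<alpha>"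
    and cocone: "cocone C X D \<iota> \<alpha> Y P S" and u: "u \<in> hom C Y Z"
  shows "cocone C X D \<iota> \<alpha> Z (\<lambda>s t. Comp C u (P s t)) (\<lambda>s. Comp C u (S s))"
proof -
  have P: "P s t \<in> hom C (D t) Y" and S: "S s \<in> hom C X Y"
    and S\<iota>: "Comp C (S (s * t)) (\<iota> t) = P s t" and S\<alpha>: "Comp C (S s) (\<alpha> t) = P s t" for s t
    using cocone unfolding cocone_def by auto
  note homs = partial_action_datum_homs[OF datum]
  show ?thesis
    unfolding cocone_def
    using cat_hom_Cod_Ob[OF C u] cat_comp_in_hom[OF C P u] cat_comp_in_hom[OF C S u]
      cat_comp_assoc[OF C homs(1) S u] cat_comp_assoc[OF C homs(2) S u] S\<iota> S\<alpha>
    by simp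
qed

lemma cocone_shift:
  assumes "cocone C X D \<iota> \<alpha> Y P S"
  shows "cocone C X D \<iota> \<alpha> Y (\<lambda>s t. P (m * s) t) (\<lambda>s. S (m * s))"
  using assms unfolding cocone_def by (simp add: mult.assoc[symmetric])

lemma cocone_orbit:
  assumes C: "category C" and datum: "partial_action_datum C X D \<iota> \<alpha>"
    and \<gamma>: "global_action C Z \<gamma>"
    and f: "datum_morphism_to_global C X D \<iota> \<alpha> Z \<gamma> f"
  shows "cocone C X D \<iota> \<alpha> Z (\<lambda>s t. Comp C (Comp C (\<gamma> s) f) (\<alpha> t)) (\<lambda>s. Comp C (\<gamma> s) f)"
proof -
  note homs = partial_action_datum_homs[OF datum]
  have f_hom: "f \<in> hom C X Z" and f_equiv: "Comp C (\<gamma> m) (Comp C f (\<iota> m)) = Comp C f (\<alpha> m)" for m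
    using f datum_morphism_to_global_iff[OF C datum] by auto
  have \<gamma>_hom: "\<gamma> m \<in> hom C Z Z" and \<gamma>_mult: "Comp C (\<gamma> s) (\<gamma> t) = \<gamma> (s * t)" for m s t
    using \<gamma> unfolding global_action_def by auto
  have orbit_hom: "Comp C (\<gamma> s) f \<in> hom C X Z" for s
    by (rule cat_comp_in_hom[OF C f_hom \<gamma>_hom])
  have "Comp C (Comp C (\<gamma> (s * t)) f) (\<iota> t) = Comp C (\<gamma> s) (Comp C (\<gamma> t) (Comp C f (\<iota> t)))"
    for s t
    using cat_comp_assoc[OF C f_hom \<gamma>_hom \<gamma>_hom] cat_comp_assoc[OF C homs(1) f_hom \<gamma>_hom]
      cat_comp_assoc[OF C homs(1) orbit_hom \<gamma>_hom] \<gamma>_mult by metis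
  also have "\<dots> s t = Comp C (Comp C (\<gamma> s) f) (\<alpha> t)" for s t
    using f_equiv cat_comp_assoc[OF C homs(2) f_hom \<gamma>_hom] by simp
  finally show ?thesis
    unfolding cocone_def
    using cat_hom_Cod_Ob[OF C f_hom] orbit_hom cat_comp_in_hom[OF C homs(2) orbit_hom] by simp
qed

locale datum_colimit =
  fixes C :: "('o, 'a) cat"
    and X Y :: 'o
    and D :: "'m::monoid_mult \<Rightarrow> 'o"
    and \<iota> \<alpha> :: "'m \<Rightarrow> 'a"
    and etaP :: "'m \<Rightarrow> 'm \<Rightarrow> 'a"
    and etaS :: "'m \<Rightarrow> 'a"
  assumes category: "category C"
    and datum: "partial_action_datum C X D \<iota> \<alpha>"
    and colimit: "colimit C X D \<iota> \<alpha> Y etaP etaS"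
begin

abbreviation act :: "'m \<Rightarrow> 'a" where
  "act \<equiv> assoc_action C Y etaP etaS"

lemma cocone: "cocone C X D \<iota> \<alpha> Y etaP etaS"
  using colimit unfolding colimit_def by simp

lemma etaS_in_hom: "etaS s \<in> hom C X Y"
  using cocone unfolding cocone_def by simp

lemma etaP_eq: "etaP s t = Comp C (etaS s) (\<alpha> t)"
  using cocone unfolding cocone_def by simp

lemma colimit_mediating:
  assumes "cocone C X D \<iota> \<alpha> Z zP zS"
  obtains u where "u \<in> hom C Y Z" "\<And>s. Comp C u (etaS s) = zS s"
  using colimit assms unfolding colimit_def by blast

lemma colimit_hom_eqI:
  assumes u: "u \<in> hom C Y Z" and v: "v \<in> hom C Y Z"
    and agree: "\<And>s. Comp C u (etaS s) = Comp C v (etaS s)"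
  shows "u = v"
proof -
  have "Comp C v (etaP s t) = Comp C u (etaP s t)" for s t
    unfolding etaP_eq
    using cat_comp_assoc[OF category partial_action_datum_homs(2)[OF datum] etaS_in_hom u]
      cat_comp_assoc[OF category partial_action_datum_homs(2)[OF datum] etaS_in_hom v] agree
    by metis
  moreover have "\<exists>!w. w \<in> hom C Y Z \<and> (\<forall>s t. Comp C w (etaP s t) = Comp C u (etaP s t)) \<and>
      (\<forall>s. Comp C w (etaS s) = Comp C u (etaS s))"
    using colimit cocone_postcomp[OF category datum cocone u] unfolding colimit_def by blast
  ultimately show ?thesis
    using u v agree by metis
qed

lemma act_characterization:
  "act m \<in> hom C Y Y \<and> (\<forall>s t. Comp C (act m) (etaP s t) = etaP (m * s) t) \<and>
     (\<forall>s. Comp C (act m) (etaS s) = etaS (m * s))"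
proof -
  have "\<exists>!b. b \<in> hom C Y Y \<and> (\<forall>s t. Comp C b (etaP s t) = etaP (m * s) t) \<and>
      (\<forall>s. Comp C b (etaS s) = etaS (m * s))"
    using colimit cocone_shift[OF cocone, of m] unfolding colimit_def by blast
  then show ?thesis
    unfolding assoc_action_def by (rule theI')
qed

lemma act_in_hom: "act m \<in> hom C Y Y"
  using act_characterization by blast

lemma act_etaS: "Comp C (act m) (etaS s) = etaS (m * s)"
  using act_characterization by blast

lemma global_action_act: "global_action C Y act"
  unfolding global_action_def
proof (intro conjI allI act_in_hom)
  show "Y \<in> Ob C"
    using cocone unfolding cocone_def by simp
  then show "act 1 = Id C Y"
    using colimit_hom_eqI[OF act_in_hom cat_Id_in_hom[OF category]]
    by (simp add: act_etaS cat_Id_left[OF category etaS_in_hom])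
  fix m n
  show "Comp C (act n) (act m) = act (n * m)"
    by (rule colimit_hom_eqI[OF cat_comp_in_hom[OF category act_in_hom act_in_hom] act_in_hom])
      (simp add: cat_comp_assoc[OF category etaS_in_hom act_in_hom act_in_hom] act_etaS mult.assoc)
qed

lemma unit_datum_morphism: "datum_morphism_to_global C X D \<iota> \<alpha> Y act (etaS 1)"
proof -
  have "Comp C (act m) (Comp C (etaS 1) (\<iota> m)) = Comp C (etaS m) (\<iota> m)" for m
    using cat_comp_assoc[OF category partial_action_datum_homs(1)[OF datum] etaS_in_hom act_in_hom,
        symmetric]
    by (simp only: act_etaS mult_1_right)
  moreover have "Comp C (etaS m) (\<iota> m) = Comp C (etaS 1) (\<alpha> m)" for m
    using cocone unfolding cocone_def by (metis mult_1)
  ultimately show ?thesis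
    unfolding datum_morphism_to_global_iff[OF category datum] using etaS_in_hom by simp
qed

lemma equivariant_extension_on_etaS:
  assumes g: "g \<in> hom C Y Z" and \<gamma>: "global_action C Z \<gamma>"
    and equiv: "\<And>m. Comp C (\<gamma> m) g = Comp C g (act m)"
    and extends: "Comp C g (etaS 1) = f"
  shows "Comp C g (etaS s) = Comp C (\<gamma> s) f"
proof -
  have "Comp C g (etaS s) = Comp C (Comp C g (act s)) (etaS 1)"
    using cat_comp_assoc[OF category etaS_in_hom act_in_hom g] by (simp add: act_etaS)
  also have "\<dots> = Comp C (\<gamma> s) f"
    using cat_comp_assoc[OF category etaS_in_hom g global_action_in_hom[OF \<gamma>]] equiv extends
    by simp
  finally show ?thesis .
qed

lemma equivariant_extension_exists:
  assumes \<gamma>: "global_action C Z \<gamma>" and f: "datum_morphism_to_global C X D \<iota> \<alpha> Z \<gamma> f"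
  shows "\<exists>g \<in> hom C Y Z. (\<forall>m. Comp C (\<gamma> m) g = Comp C g (act m)) \<and> Comp C g (etaS 1) = f"
proof -
  have f_hom: "f \<in> hom C X Z"
    using f unfolding datum_morphism_def by simp
  obtain g where g: "g \<in> hom C Y Z" and g_etaS: "\<And>s. Comp C g (etaS s) = Comp C (\<gamma> s) f"
    using colimit_mediating[OF cocone_orbit[OF category datum \<gamma> f]] by blast
  have \<gamma>_hom: "\<gamma> m \<in> hom C Z Z" and \<gamma>_mult: "Comp C (\<gamma> m) (\<gamma> s) = \<gamma> (m * s)"
    and \<gamma>_1: "\<gamma> 1 = Id C Z" for m s
    using \<gamma> unfolding global_action_def by auto
  have "Comp C (\<gamma> m) g = Comp C g (act m)" for m
  proof (rule colimit_hom_eqI[OF cat_comp_in_hom[OF category g \<gamma>_hom]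
        cat_comp_in_hom[OF category act_in_hom g]])
    fix s
    show "Comp C (Comp C (\<gamma> m) g) (etaS s) = Comp C (Comp C g (act m)) (etaS s)"
      using cat_comp_assoc[OF category etaS_in_hom g \<gamma>_hom]
        cat_comp_assoc[OF category etaS_in_hom act_in_hom g]
        cat_comp_assoc[OF category f_hom \<gamma>_hom \<gamma>_hom]
      by (simp add: g_etaS act_etaS \<gamma>_mult)
  qed
  moreover have "Comp C g (etaS 1) = f"
    using g_etaS[of 1] by (simp add: \<gamma>_1 cat_Id_left[OF category f_hom])
  ultimately show ?thesis
    using g by blast
qed

theorem reflection_etaS_1: "reflection C X D \<iota> \<alpha> Y act (etaS 1)"
  unfolding reflection_def datum_morphism_between_globals_iff[OF category]
proof (intro conjI allI impI global_action_act unit_datum_morphism)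
  fix Z \<gamma> f
  assume \<gamma>: "global_action C Z \<gamma>" and f: "datum_morphism_to_global C X D \<iota> \<alpha> Z \<gamma> f"
  obtain g where g: "g \<in> hom C Y Z" "\<And>m. Comp C (\<gamma> m) g = Comp C g (act m)"
    "Comp C g (etaS 1) = f"
    using equivariant_extension_exists[OF \<gamma> f] by blast
  show "\<exists>!g. (g \<in> hom C Y Z \<and> (\<forall>m. Comp C (\<gamma> m) g = Comp C g (act m))) \<and> Comp C g (etaS 1) = f"
  proof (rule ex1I[of _ g])
    fix h
    assume "(h \<in> hom C Y Z \<and> (\<forall>m. Comp C (\<gamma> m) h = Comp C h (act m))) \<and> Comp C h (etaS 1) = f"
    then have h: "h \<in> hom C Y Z" "\<And>m. Comp C (\<gamma> m) h = Comp C h (act m)" "Comp C h (etaS 1) = f"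
      by auto
    show "h = g"
      by (rule colimit_hom_eqI[OF h(1) g(1)])
        (simp only: equivariant_extension_on_etaS[OF h(1) \<gamma> h(2,3)]
          equivariant_extension_on_etaS[OF g(1) \<gamma> g(2,3)])
  qed (use g in blast)
qed

end

theorem mainTheorem8:
  fixes C :: "('o, 'a) cat"
    and X Y :: 'o
    and D :: "'m::monoid_mult \<Rightarrow> 'o"
    and \<iota> \<alpha> :: "'m \<Rightarrow> 'a"
    and etaP :: "'m \<Rightarrow> 'm \<Rightarrow> 'a"
    and etaS :: "'m \<Rightarrow> 'a"
  assumes "category C"
    and "has_pullbacks C"
    and "partial_action_datum C X D \<iota> \<alpha>"
    and "colimit C X D \<iota> \<alpha> Y etaP etaS"
  shows "reflection C X D \<iota> \<alpha> Y (assoc_action C Y etaP etaS) (etaS 1)"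
proof -
  interpret datum_colimit C X Y D \<iota> \<alpha> etaP etaS
    using assms(1,3,4) by unfold_locales
  show ?thesis
    by (rule reflection_etaS_1)
qed

end
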